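(* Let $\Omega=(\lambda x.x\,x)(\lambda x.x\,x)$. Then $\Omega\approx^p_{\emptyset}\mathcal Sk.\Omega$.
   Context: Terms of $\lambda_S$: $t ::= x \mid \lambda x.t \mid t\,t \mid \mathcal{S}k.t \mid \langle t\rangle$ (shift binds $k$; $\langle\cdot\rangle$ reset), up to $\alpha$-conversion. Values $v::=\lambda x.t$. Pure contexts $E ::= \Box \mid v\,E \mid E\,t$; evaluation contexts $F ::= \Box \mid v\,F \mid F\,t \mid \langle F\rangle$. Reduction: $F[(\lambda x.t)v]\to F[t\{v/x\}]$; $F[\langle E[\mathcal Sk.t]\rangle]\to F[\langle t\{\lambda x.\langle E[x]\rangle/k\}\rangle]$ ($x\notin\mathrm{fv}(E)$); $F[\langle v\rangle]\to F[v]$; $\to^*$ reflexive-transitive closure. Program: term $\langle t\rangle$ (ranged over by $p$). Closures: for $R$ a relation on closed terms, $\widetilde R$ is the smallest relation containing $R$, all $(x,x)$, closed under all term constructors, restricted to closed terms; $\widehat R$ is the smallest relation on closed evaluation contexts with $\Box\widehat R\Box$, $v_0F_0\widehat Rv_1F_1$ if $F_0\widehat RF_1,v_0\widetilde Rv_1$; $F_0t_0\widehat RF_1t_1$ if $F_0\widehat RF_1,t_0\widetilde Rt_1$; $\langle F_0\rangle\widehat R\langle F_1\rangle$ if $F_0\widehat RF_1$. Environmental bisimilarity for programs: an environment $\mathcal E$ is a relation on closed values; an environmental relation $\mathcal X$ is a set of environments and triples $(\mathcal E,t_0,t_1)$, $t_0,t_1$ closed, written $t_0\mathcal X_{\mathcal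 E}t_1$. $\mathcal X$ is an environmental bisimulation for programs if (1) if $t_0\mathcal X_{\mathcal E}t_1$ and $t_0,t_1$ are not both programs, then for all pure $E_0\widehat{\mathcal E}E_1$, $\langle E_0[t_0]\rangle\mathcal X_{\mathcal E}\langle E_1[t_1]\rangle$; (2) if $p_0\mathcal X_{\mathcal E}p_1$: (a) $p_0\to p_0'$ (program) implies $p_1\to^*p_1'$ (program) with $p_0'\mathcal X_{\mathcal E}p_1'$; (b) $p_0\to v_0$ implies $p_1\to^*v_1$ and $\{(v_0,v_1)\}\cup\mathcal E\in\mathcal X$; (c) symmetric conditions; (3) for $\mathcal E\in\mathcal X$, $(\lambda x.t_0)\mathcal E(\lambda x.t_1)$ and $v_0\widetilde{\mathcal E}v_1$ imply $t_0\{v_0/x\}\mathcal X_{\mathcal E}t_1\{v_1/x\}$. $\approx^p$ is the largest such relation; $t_0\approx^p_{\emptyset}t_1$ means $(\emptyset,t_0,t_1)\in\approx^p$. *)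

theory Defs
  imports Main
begin

text \<open>Var n is a de Bruijn index; Lam and Shift each bind index 0 in their body
  (Shift t represents S k. t, with k bound); Reset t is the delimiter.\<close>

datatype trm = Var nat | Lam trm | App trm trm | Shift trm | Reset trm

fun closedn :: "nat \<Rightarrow> trm \<Rightarrow> bool" where
  "closedn k (Var n) = (n < k)"
| "closedn k (Lam t) = closedn (Suc k) t"
| "closedn k (App s t) = (closedn k s \<and> closedn k t)"
| "closedn k (Shift t) = closedn (Suc k) t"
| "closedn k (Reset t) = closedn k t"

definition closed :: "trm \<Rightarrow> bool" where
  "closed t = closedn 0 t"

fun lift :: "nat \<Rightarrow> trm \<Rightarrow> trm" where
  "lift k (Var n) = (if n < k then Var n else Var (Suc n))"
| "lift k (Lam t) = Lam (lift (Suc k) t)"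
| "lift k (App s t) = App (lift k s) (lift k t)"
| "lift k (Shift t) = Shift (lift (Suc k) t)"
| "lift k (Reset t) = Reset (lift k t)"

fun subst :: "trm \<Rightarrow> nat \<Rightarrow> trm \<Rightarrow> trm" where
  "subst (Var n) k s = (if n < k then Var n else if n = k then s else Var (n - 1))"
| "subst (Lam t) k s = Lam (subst t (Suc k) (lift 0 s))"
| "subst (App t u) k s = App (subst t k s) (subst u k s)"
| "subst (Shift t) k s = Shift (subst t (Suc k) (lift 0 s))"
| "subst (Reset t) k s = Reset (subst t k s)"

text \<open>t{v/x} where x is the outermost bound variable (index 0) of the body t.\<close>
definition subst0 :: "trm \<Rightarrow> trm \<Rightarrow> trm" where
  "subst0 t v = subst t 0 v"

fun is_val :: "trm \<Rightarrow> bool" where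
  "is_val (Lam t) = True"
| "is_val _ = False"

fun is_prog :: "trm \<Rightarrow> bool" where
  "is_prog (Reset t) = True"
| "is_prog _ = False"

datatype ctx = Hole | ArgC trm ctx | FunC ctx trm | RCtx ctx

fun plug :: "ctx \<Rightarrow> trm \<Rightarrow> trm" where
  "plug Hole t = t"
| "plug (ArgC v E) t = App v (plug E t)"
| "plug (FunC E u) t = App (plug E t) u"
| "plug (RCtx E) t = Reset (plug E t)"

fun pure :: "ctx \<Rightarrow> bool" where
  "pure Hole = True"
| "pure (ArgC v E) = (is_val v \<and> pure E)"
| "pure (FunC E u) = pure E"
| "pure (RCtx E) = False"

fun evctx :: "ctx \<Rightarrow> bool" where
  "evctx Hole = True"
| "evctx (ArgC v E) = (is_val v \<and> evctx E)"
| "evctx (FunC E u) = evctx E"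
| "evctx (RCtx E) = evctx E"

fun liftc :: "nat \<Rightarrow> ctx \<Rightarrow> ctx" where
  "liftc k Hole = Hole"
| "liftc k (ArgC v E) = ArgC (lift k v) (liftc k E)"
| "liftc k (FunC E u) = FunC (liftc k E) (lift k u)"
| "liftc k (RCtx E) = RCtx (liftc k E)"

inductive red :: "trm \<Rightarrow> trm \<Rightarrow> bool" where
  beta: "evctx F \<Longrightarrow> is_val v \<Longrightarrow>
     red (plug F (App (Lam t) v)) (plug F (subst0 t v))"
| shift: "evctx F \<Longrightarrow> pure E \<Longrightarrow>
     red (plug F (Reset (plug E (Shift t))))
         (plug F (Reset (subst0 t (Lam (Reset (plug (liftc 0 E) (Var 0)))))))"
| reset: "evctx F \<Longrightarrow> is_val v \<Longrightarrow> red (plug F (Reset v)) (plug F v)"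

abbreviation reds :: "trm \<Rightarrow> trm \<Rightarrow> bool" where
  "reds \<equiv> red\<^sup>*\<^sup>*"

inductive compat :: "trm rel \<Rightarrow> trm \<Rightarrow> trm \<Rightarrow> bool" for R where
  base: "(t0, t1) \<in> R \<Longrightarrow> compat R t0 t1"
| var: "compat R (Var n) (Var n)"
| lam: "compat R t0 t1 \<Longrightarrow> compat R (Lam t0) (Lam t1)"
| app: "compat R s0 s1 \<Longrightarrow> compat R t0 t1 \<Longrightarrow> compat R (App s0 t0) (App s1 t1)"
| shft: "compat R t0 t1 \<Longrightarrow> compat R (Shift t0) (Shift t1)"
| rst: "compat R t0 t1 \<Longrightarrow> compat R (Reset t0) (Reset t1)"

definition tilde :: "trm rel \<Rightarrow> trm rel" where
  "tilde R = {(t0, t1). compat R t0 t1 \<and> closed t0 \<and> closed t1}"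

inductive hat :: "trm rel \<Rightarrow> ctx \<Rightarrow> ctx \<Rightarrow> bool" for R where
  hole: "hat R Hole Hole"
| arg: "hat R F0 F1 \<Longrightarrow> is_val v0 \<Longrightarrow> is_val v1 \<Longrightarrow> (v0, v1) \<in> tilde R \<Longrightarrow>
         hat R (ArgC v0 F0) (ArgC v1 F1)"
| func: "hat R F0 F1 \<Longrightarrow> (t0, t1) \<in> tilde R \<Longrightarrow> hat R (FunC F0 t0) (FunC F1 t1)"
| rctx: "hat R F0 F1 \<Longrightarrow> hat R (RCtx F0) (RCtx F1)"

text \<open>An environmental relation is a set whose elements are environments (Env E)
  or triples (Tri E t0 t1), the latter written t0 X_E t1.\<close>
datatype elem = Env "trm rel" | Tri "trm rel" trm trm

definition is_env :: "trm rel \<Rightarrow> bool" where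
  "is_env E \<longleftrightarrow> (\<forall>(v0, v1) \<in> E. is_val v0 \<and> is_val v1 \<and> closed v0 \<and> closed v1)"

definition env_rel :: "elem set \<Rightarrow> bool" where
  "env_rel X \<longleftrightarrow> (\<forall>E. Env E \<in> X \<longrightarrow> is_env E) \<and>
     (\<forall>E t0 t1. Tri E t0 t1 \<in> X \<longrightarrow> is_env E \<and> closed t0 \<and> closed t1)"

definition env_bisim :: "elem set \<Rightarrow> bool" where
  "env_bisim X \<longleftrightarrow> env_rel X \<and>
   \<comment> \<open>(1)\<close>
   (\<forall>E t0 t1. Tri E t0 t1 \<in> X \<and> \<not> (is_prog t0 \<and> is_prog t1) \<longrightarrow>
      (\<forall>E0 E1. pure E0 \<and> pure E1 \<and> hat E E0 E1 \<longrightarrow>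
         Tri E (Reset (plug E0 t0)) (Reset (plug E1 t1)) \<in> X)) \<and>
   \<comment> \<open>(2)\<close>
   (\<forall>E p0 p1. Tri E p0 p1 \<in> X \<and> is_prog p0 \<and> is_prog p1 \<longrightarrow>
      (\<forall>p0'. red p0 p0' \<and> is_prog p0' \<longrightarrow>
          (\<exists>p1'. reds p1 p1' \<and> is_prog p1' \<and> Tri E p0' p1' \<in> X)) \<and>
      (\<forall>v0. red p0 v0 \<and> is_val v0 \<longrightarrow>
          (\<exists>v1. reds p1 v1 \<and> is_val v1 \<and> Env ({(v0, v1)} \<union> E) \<in> X)) \<and>
      (\<forall>p1'. red p1 p1' \<and> is_prog p1' \<longrightarrow>
          (\<exists>p0'. reds p0 p0' \<and> is_prog p0' \<and> Tri E p0' p1' \<in> X)) \<and>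
      (\<forall>v1. red p1 v1 \<and> is_val v1 \<longrightarrow>
          (\<exists>v0. reds p0 v0 \<and> is_val v0 \<and> Env ({(v0, v1)} \<union> E) \<in> X))) \<and>
   \<comment> \<open>(3)\<close>
   (\<forall>E t0 t1 v0 v1. Env E \<in> X \<and> (Lam t0, Lam t1) \<in> E \<and> is_val v0 \<and> is_val v1 \<and>
        (v0, v1) \<in> tilde E \<longrightarrow> Tri E (subst0 t0 v0) (subst0 t1 v1) \<in> X)"

definition bisim_p :: "elem set" where
  "bisim_p = \<Union>{X. env_bisim X}"

definition Omega :: trm where
  "Omega = App (Lam (App (Var 0) (Var 0))) (Lam (App (Var 0) (Var 0)))"

end

theory Submission
  imports Defs
begin

text \<open>Every program \<open>\<langle>E[\<Omega>]\<rangle>\<close> reduces only to itself, so it never yields a value, and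
  \<open>\<langle>E[\<S>k.\<Omega>]\<rangle>\<close> reduces only to \<open>\<langle>\<Omega>\<rangle>\<close>. Hence the relation pairing \<open>\<Omega>\<close> with \<open>\<S>k.\<Omega>\<close>,
  and every closed \<open>\<langle>E[\<Omega>]\<rangle>\<close> with every closed \<open>\<langle>E'[\<Omega>]\<rangle>\<close> or \<open>\<langle>E'[\<S>k.\<Omega>]\<rangle>\<close>, with empty
  environment, is an environmental bisimulation for programs. The reduction facts rest on
  unique decomposition: \<open>\<Omega>\<close> and \<open>\<S>k.t\<close> have no non-value in a proper evaluation
  position (they are \<open>eval_atomic\<close>), so any redex of such a program contains them intact.\<close>

lemma is_val_plug [simp]: "is_val (plug F t) \<longleftrightarrow> F = Hole \<and> is_val t"
  by (cases F) auto

lemma plug_eq_Lam_iff [simp]: "plug F t = Lam u \<longleftrightarrow> F = Hole \<and> t = Lam u"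
  by (cases F) auto

lemma Lam_eq_plug_iff [simp]: "Lam u = plug F t \<longleftrightarrow> F = Hole \<and> t = Lam u"
  by (cases F) auto

lemma Shift_eq_plug_iff [simp]: "Shift u = plug F t \<longleftrightarrow> F = Hole \<and> t = Shift u"
  by (cases F) auto

lemma plug_eq_Shift_iff [simp]: "plug F t = Shift u \<longleftrightarrow> F = Hole \<and> t = Shift u"
  by (cases F) auto

lemma hat_plug_closed:
  "hat R F0 F1 \<Longrightarrow> closed t0 \<Longrightarrow> closed t1 \<Longrightarrow> closed (plug F0 t0) \<and> closed (plug F1 t1)"
  by (induction rule: hat.induct) (auto simp: tilde_def closed_def)

lemma pure_imp_evctx: "pure E \<Longrightarrow> evctx E"
  by (induction E) auto

definition eval_atomic :: "trm \<Rightarrow> bool" where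
  "eval_atomic s \<longleftrightarrow> (\<forall>H r. evctx H \<and> plug H r = s \<and> \<not> is_val r \<longrightarrow> H = Hole)"

lemma eval_atomicD: "eval_atomic s \<Longrightarrow> evctx H \<Longrightarrow> plug H r = s \<Longrightarrow> \<not> is_val r \<Longrightarrow> H = Hole"
  unfolding eval_atomic_def by blast

lemma eval_atomic_Omega: "eval_atomic Omega"
proof -
  have "H = Hole" if "evctx H" "plug H r = Omega" "\<not> is_val r" for H r
    using that by (cases H) (auto simp: Omega_def)
  then show ?thesis
    unfolding eval_atomic_def by blast
qed

lemma eval_atomic_Shift: "eval_atomic (Shift u)"
  unfolding eval_atomic_def by simp

lemma plug_eq_plug_eval_atomic:
  assumes "evctx F" "evctx G" "eval_atomic s" "\<not> is_val s" "\<not> is_val r"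
    and "plug F r = plug G s"
  shows "\<exists>H. evctx H \<and> r = plug H s"
  using assms
proof (induction F arbitrary: G)
  case Hole
  then show ?case by auto
next
  case (ArgC w F)
  then show ?case
    by (cases G) (auto dest: eval_atomicD[where H = "ArgC w F"])
next
  case (FunC F u)
  then show ?case
    by (cases G) (auto dest: eval_atomicD[where H = "FunC F u"])
next
  case (RCtx F)
  then show ?case
    by (cases G) (auto dest: eval_atomicD[where H = "RCtx F"])
qed

lemma plug_pure_Shift_neq_plug_Reset:
  "pure E \<Longrightarrow> evctx F \<Longrightarrow> plug E (Shift u) \<noteq> plug F (Reset x)"
proof (induction E arbitrary: F)
  case (ArgC v E)
  then show ?case by (cases F) auto
next
  case (FunC E t)
  then show ?case by (cases F) auto
qed simp_all

lemma Reset_plug_eq_plug_eval_atomic: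
  assumes "pure E" "evctx F" "eval_atomic s" "\<not> is_val s" "\<not> is_val r"
    and "Reset (plug E s) = plug F r"
  shows "\<exists>H. evctx H \<and> r = plug H s"
  using assms by (intro plug_eq_plug_eval_atomic[where G = "RCtx E"]) (simp_all add: pure_imp_evctx)

lemma closed_Omega [simp]: "closed Omega"
  by (simp add: closed_def Omega_def)

lemma closed_Shift_Omega [simp]: "closed (Shift Omega)"
  by (simp add: closed_def Omega_def)

lemma subst_Omega [simp]: "subst Omega k s = Omega"
  by (simp add: Omega_def)

lemma not_is_val_Omega [simp]: "\<not> is_val Omega"
  by (simp add: Omega_def)

lemma red_Reset_plug_Omega:
  assumes "pure E" and "red (Reset (plug E Omega)) q"
  shows "q = Reset (plug E Omega)"
  using assms(2)
proof cases
  case (beta F v t)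
  obtain H where "evctx H" "App (Lam t) v = plug H Omega"
    using Reset_plug_eq_plug_eval_atomic[OF assms(1) beta(3) eval_atomic_Omega not_is_val_Omega _ beta(1)]
    by auto
  then have redex: "App (Lam t) v = Omega"
    using \<open>is_val v\<close> by (cases H) (auto simp: Omega_def)
  then have "subst0 t v = Omega"
    by (auto simp: Omega_def subst0_def)
  then show ?thesis
    using beta redex by simp
next
  case (shift F E' t)
  obtain H where "evctx H" "Reset (plug E' (Shift t)) = plug H Omega"
    using Reset_plug_eq_plug_eval_atomic[OF assms(1) shift(3) eval_atomic_Omega not_is_val_Omega _ shift(1)]
    by auto
  then obtain H' where "evctx H'" "plug E' (Shift t) = plug H' Omega"
    by (cases H) (auto simp: Omega_def)
  then obtain H'' where "Shift t = plug H'' Omega"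
    using plug_eq_plug_eval_atomic[OF _ _ eval_atomic_Omega, of E' H' "Shift t"] shift
    by (auto simp: pure_imp_evctx)
  then show ?thesis
    by (cases H'') (auto simp: Omega_def)
next
  case (reset F v)
  obtain H where "evctx H" "Reset v = plug H Omega"
    using Reset_plug_eq_plug_eval_atomic[OF assms(1) reset(3) eval_atomic_Omega not_is_val_Omega _ reset(1)]
    by auto
  then show ?thesis
    using \<open>is_val v\<close> by (cases H) (auto simp: Omega_def)
qed

lemma red_Reset_plug_Shift_Omega:
  assumes "pure E" and "red (Reset (plug E (Shift Omega))) q"
  shows "q = Reset Omega"
  using assms(2)
proof cases
  case (beta F v t)
  obtain H where "evctx H" "App (Lam t) v = plug H (Shift Omega)"
    using Reset_plug_eq_plug_eval_atomic[OF assms(1) beta(3) eval_atomic_Shift _ _ beta(1)]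
    by auto
  then show ?thesis
    using \<open>is_val v\<close> by (cases H) auto
next
  case (shift F E' t)
  have "F = Hole"
    using shift assms(1) plug_pure_Shift_neq_plug_Reset by (cases F) auto
  then have decomp: "plug E' (Shift t) = plug E (Shift Omega)"
    using shift by simp
  have "t = Omega"
    using plug_eq_plug_eval_atomic[OF pure_imp_evctx[OF shift(4)] pure_imp_evctx[OF assms(1)]
        eval_atomic_Shift _ _ decomp]
    by auto
  then show ?thesis
    using shift \<open>F = Hole\<close> by (simp add: subst0_def)
next
  case (reset F v)
  obtain H where "evctx H" "Reset v = plug H (Shift Omega)"
    using Reset_plug_eq_plug_eval_atomic[OF assms(1) reset(3) eval_atomic_Shift _ _ reset(1)]
    by auto
  then show ?thesis
    using \<open>is_val v\<close> by (cases H) auto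
qed

definition Omega_programs :: "trm set" where
  "Omega_programs = {Reset (plug E Omega) | E. pure E \<and> closed (plug E Omega)}"

definition Shift_Omega_programs :: "trm set" where
  "Shift_Omega_programs = {Reset (plug E (Shift Omega)) | E. pure E \<and> closed (plug E (Shift Omega))}"

lemma Omega_programs_red: "p \<in> Omega_programs \<Longrightarrow> red p q \<Longrightarrow> q = p"
  unfolding Omega_programs_def using red_Reset_plug_Omega by blast

lemma Reset_Omega_in_Omega_programs: "Reset Omega \<in> Omega_programs"
  unfolding Omega_programs_def by (auto intro!: exI[of _ Hole])

lemma Shift_Omega_programs_red: "p \<in> Shift_Omega_programs \<Longrightarrow> red p q \<Longrightarrow> q \<in> Omega_programs"
  unfolding Shift_Omega_programs_def
  using red_Reset_plug_Shift_Omega Reset_Omega_in_Omega_programs by blast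

lemma closed_program_if_in_programs:
  "p \<in> Omega_programs \<union> Shift_Omega_programs \<Longrightarrow> is_prog p \<and> \<not> is_val p \<and> closed p"
  unfolding Omega_programs_def Shift_Omega_programs_def closed_def by auto

lemma red_programs_Omega_programs:
  "p \<in> Omega_programs \<union> Shift_Omega_programs \<Longrightarrow> red p q \<Longrightarrow> q \<in> Omega_programs"
  using Omega_programs_red Shift_Omega_programs_red by blast

lemma Reset_plug_in_programs:
  assumes "pure E0" "pure E1" "hat R E0 E1"
  shows "Reset (plug E0 Omega) \<in> Omega_programs" "Reset (plug E1 (Shift Omega)) \<in> Shift_Omega_programs"
  using assms hat_plug_closed[OF assms(3) closed_Omega closed_Shift_Omega]
  unfolding Omega_programs_def Shift_Omega_programs_def by blast+

definition Omega_Shift_rel :: "elem set" where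
  "Omega_Shift_rel = insert (Tri {} Omega (Shift Omega))
     {Tri {} p0 p1 | p0 p1. p0 \<in> Omega_programs \<and> p1 \<in> Omega_programs \<union> Shift_Omega_programs}"

lemma env_bisim_Omega_Shift_rel: "env_bisim Omega_Shift_rel"
proof -
  have mem: "Tri E t0 t1 \<in> Omega_Shift_rel \<longleftrightarrow> E = {} \<and>
      (t0 = Omega \<and> t1 = Shift Omega \<or> t0 \<in> Omega_programs \<and> t1 \<in> Omega_programs \<union> Shift_Omega_programs)"
    for E t0 t1
    by (auto simp: Omega_Shift_rel_def)
  have no_env: "Env E \<notin> Omega_Shift_rel" for E
    by (auto simp: Omega_Shift_rel_def)
  have not_prog_Omega: "\<not> is_prog Omega"
    by (simp add: Omega_def)
  show ?thesis
    unfolding env_bisim_def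
    apply (intro conjI)
    subgoal
      unfolding env_rel_def is_env_def using closed_program_if_in_programs
      by (auto simp: mem no_env)
    subgoal
      using Reset_plug_in_programs closed_program_if_in_programs by (auto simp: mem not_prog_Omega)
    subgoal
      using red_programs_Omega_programs Omega_programs_red closed_program_if_in_programs
      by (auto simp: mem not_prog_Omega) blast+
    subgoal
      by (simp add: no_env)
    done
qed

theorem lemma18:
  shows "Tri {} Omega (Shift Omega) \<in> bisim_p"
  using env_bisim_Omega_Shift_rel unfolding bisim_p_def Omega_Shift_rel_def by blast

end
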